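(* For all finite multisets of formulas $\Gamma,\Delta$: $\vdash_{\mathsf{GT}^-}\Gamma\Rightarrow\Delta$ if and only if $\vdash_{\mathsf{GT}'^-}\Gamma\Rightarrow\Delta$.
   Context: Fix a countably infinite set $\mathsf{Prop}$ of propositional variables. Classical formulas are generated by $\alpha ::= p \mid \bot \mid \neg\alpha \mid \alpha\wedge\alpha \mid \alpha\vee\alpha$ with $p\in\mathsf{Prop}$. Formulas are generated by $\phi ::= \alpha \mid \phi\wedge\phi \mid \phi\vee\phi \mid \phi\mathbin{\backslash\!\!/}\phi$ where $\alpha$ is classical ($\vee$: split disjunction, $\mathbin{\backslash\!\!/}$: inquisitive disjunction). A sequent is $\Gamma\Rightarrow\Delta$ with $\Gamma,\Delta$ finite multisets of formulas; "$\Gamma,\Delta$" is multiset union. Deep-inference notation: for a formula $\chi$ with a designated occurrence of a subformula not in the scope of any negation, $\chi\{\eta\}$ denotes the result of replacing that occurrence by $\eta$. The cut-free calculus $\mathsf{GT}^-$ ($\alpha$ ranges over classical formulas, $\Lambda$ over multisets of classical formulas): axioms $\Gamma,p\Rightarrow p,\Delta$ and $\Gamma,\bot\Rightarrow\Delta$; (L$\neg$) from $\Gamma\Rightarrow\alpha,\Delta$ infer $\Gamma,\neg\alpha\Rightarrow\Delta$; (R$\neg$) from $\Gamma,\alpha\Rightarrow\Delta$ infer $\Gamma\Rightarrow\neg\alpha,\Delta$; (L$\wedge$) from $\Gamma,\phi,\psi\Rightarrow\Delta$ infer $\Gamma,\phi\wedge\psi\Rightarrow\Delta$; (R$\wedge$)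 from $\Gamma\Rightarrow\phi,\Lambda$ and $\Gamma\Rightarrow\psi,\Lambda$ infer $\Gamma\Rightarrow\phi\wedge\psi,\Lambda,\Delta$; (L$\vee$) from $\Gamma,\phi\Rightarrow\Lambda$ and $\Gamma,\psi\Rightarrow\Lambda$ infer $\Gamma,\phi\vee\psi\Rightarrow\Lambda,\Delta$; (R$\vee$) from $\Gamma\Rightarrow\phi,\psi,\Delta$ infer $\Gamma\Rightarrow\phi\vee\psi,\Delta$; (L$\mathbin{\backslash\!\!/}$) from $\Gamma,\chi\{\phi_L\}\Rightarrow\Delta$ and $\Gamma,\chi\{\phi_R\}\Rightarrow\Delta$ infer $\Gamma,\chi\{\phi_L\mathbin{\backslash\!\!/}\phi_R\}\Rightarrow\Delta$; (R$\mathbin{\backslash\!\!/}$) from $\Gamma\Rightarrow\chi\{\phi_i\},\Delta$ ($i\in\{L,R\}$) infer $\Gamma\Rightarrow\chi\{\phi_L\mathbin{\backslash\!\!/}\phi_R\},\Delta$. The calculus $\mathsf{GT}'^-$ has the same axioms and rules as $\mathsf{GT}^-$ except that (R$\wedge$) and (L$\vee$) are replaced by: (L$\vee'$) from $\Gamma_1,\phi\Rightarrow\Delta_1$ and $\Gamma_2,\psi\Rightarrow\Delta_2$ infer $\Gamma_1,\Gamma_2,\phi\vee\psi\Rightarrow\Delta_1,\Delta_2$; (R$\wedge'$) from $\Gamma_1\Rightarrow\phi,\Delta_1$ and $\Gamma_2\Rightarrow\psi,\Delta_2$ infer $\Gamma_1,\Gamma_2\Rightarrow\phi\wedge\psi,\Delta_1,\Delta_2$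 (all formulas and multisets arbitrary); and the structural rules (LC) from $\Gamma,\phi,\phi\Rightarrow\Delta$ infer $\Gamma,\phi\Rightarrow\Delta$ ($\phi$ arbitrary), and (RC) from $\Gamma\Rightarrow\alpha,\alpha,\Delta$ infer $\Gamma\Rightarrow\alpha,\Delta$ ($\alpha$ classical) are added. Neither calculus contains a cut rule. *)

theory Defs
  imports Main "HOL-Library.Multiset"
begin

text \<open>Propositional variables: the countably infinite set nat.
  IDisj is the inquisitive disjunction, Disj the split (classical) disjunction.\<close>

datatype fm = Atom nat | Bot | Neg fm | Conj fm fm | Disj fm fm | IDisj fm fm

fun classical :: "fm \<Rightarrow> bool" where
  "classical (Atom p) = True"
| "classical Bot = True"
| "classical (Neg a) = classical a"
| "classical (Conj a b) = (classical a \<and> classical b)"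
| "classical (Disj a b) = (classical a \<and> classical b)"
| "classical (IDisj a b) = False"

fun wf_fm :: "fm \<Rightarrow> bool" where
  "wf_fm (Atom p) = True"
| "wf_fm Bot = True"
| "wf_fm (Neg a) = classical a"
| "wf_fm (Conj a b) = (wf_fm a \<and> wf_fm b)"
| "wf_fm (Disj a b) = (wf_fm a \<and> wf_fm b)"
| "wf_fm (IDisj a b) = (wf_fm a \<and> wf_fm b)"

text \<open>Deep-inference contexts: a designated hole not in the scope of any negation.\<close>
datatype ctx = Hole
  | CConjL ctx fm | CConjR fm ctx
  | CDisjL ctx fm | CDisjR fm ctx
  | CIDisjL ctx fm | CIDisjR fm ctx

fun fill :: "ctx \<Rightarrow> fm \<Rightarrow> fm" where
  "fill Hole e = e"
| "fill (CConjL c b) e = Conj (fill c e) b"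
| "fill (CConjR a c) e = Conj a (fill c e)"
| "fill (CDisjL c b) e = Disj (fill c e) b"
| "fill (CDisjR a c) e = Disj a (fill c e)"
| "fill (CIDisjL c b) e = IDisj (fill c e) b"
| "fill (CIDisjR a c) e = IDisj a (fill c e)"

inductive GT :: "fm multiset \<Rightarrow> fm multiset \<Rightarrow> bool" where
  ax_atom: "GT (add_mset (Atom p) \<Gamma>) (add_mset (Atom p) \<Delta>)"
| ax_bot: "GT (add_mset Bot \<Gamma>) \<Delta>"
| L_neg: "classical a \<Longrightarrow> GT \<Gamma> (add_mset a \<Delta>) \<Longrightarrow> GT (add_mset (Neg a) \<Gamma>) \<Delta>"
| R_neg: "classical a \<Longrightarrow> GT (add_mset a \<Gamma>) \<Delta> \<Longrightarrow> GT \<Gamma> (add_mset (Neg a) \<Delta>)"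
| L_conj: "GT (add_mset \<phi> (add_mset \<psi> \<Gamma>)) \<Delta> \<Longrightarrow> GT (add_mset (Conj \<phi> \<psi>) \<Gamma>) \<Delta>"
| R_conj: "\<forall>x\<in>#\<Lambda>. classical x \<Longrightarrow> GT \<Gamma> (add_mset \<phi> \<Lambda>) \<Longrightarrow> GT \<Gamma> (add_mset \<psi> \<Lambda>)
    \<Longrightarrow> GT \<Gamma> (add_mset (Conj \<phi> \<psi>) (\<Lambda> + \<Delta>))"
| L_disj: "\<forall>x\<in>#\<Lambda>. classical x \<Longrightarrow> GT (add_mset \<phi> \<Gamma>) \<Lambda> \<Longrightarrow> GT (add_mset \<psi> \<Gamma>) \<Lambda>
    \<Longrightarrow> GT (add_mset (Disj \<phi> \<psi>) \<Gamma>) (\<Lambda> + \<Delta>)"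
| R_disj: "GT \<Gamma> (add_mset \<phi> (add_mset \<psi> \<Delta>)) \<Longrightarrow> GT \<Gamma> (add_mset (Disj \<phi> \<psi>) \<Delta>)"
| L_idisj: "GT (add_mset (fill \<chi> \<phi>) \<Gamma>) \<Delta> \<Longrightarrow> GT (add_mset (fill \<chi> \<psi>) \<Gamma>) \<Delta>
    \<Longrightarrow> GT (add_mset (fill \<chi> (IDisj \<phi> \<psi>)) \<Gamma>) \<Delta>"
| R_idisjL: "GT \<Gamma> (add_mset (fill \<chi> \<phi>) \<Delta>) \<Longrightarrow> GT \<Gamma> (add_mset (fill \<chi> (IDisj \<phi> \<psi>)) \<Delta>)"
| R_idisjR: "GT \<Gamma> (add_mset (fill \<chi> \<psi>) \<Delta>) \<Longrightarrow> GT \<Gamma> (add_mset (fill \<chi> (IDisj \<phi> \<psi>)) \<Delta>)"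

inductive GT' :: "fm multiset \<Rightarrow> fm multiset \<Rightarrow> bool" where
  ax_atom: "GT' (add_mset (Atom p) \<Gamma>) (add_mset (Atom p) \<Delta>)"
| ax_bot: "GT' (add_mset Bot \<Gamma>) \<Delta>"
| L_neg: "classical a \<Longrightarrow> GT' \<Gamma> (add_mset a \<Delta>) \<Longrightarrow> GT' (add_mset (Neg a) \<Gamma>) \<Delta>"
| R_neg: "classical a \<Longrightarrow> GT' (add_mset a \<Gamma>) \<Delta> \<Longrightarrow> GT' \<Gamma> (add_mset (Neg a) \<Delta>)"
| L_conj: "GT' (add_mset \<phi> (add_mset \<psi> \<Gamma>)) \<Delta> \<Longrightarrow> GT' (add_mset (Conj \<phi> \<psi>) \<Gamma>) \<Delta>"
| R_conj': "GT' \<Gamma>1 (add_mset \<phi> \<Delta>1) \<Longrightarrow> GT' \<Gamma>2 (add_mset \<psi> \<Delta>2)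
    \<Longrightarrow> GT' (\<Gamma>1 + \<Gamma>2) (add_mset (Conj \<phi> \<psi>) (\<Delta>1 + \<Delta>2))"
| L_disj': "GT' (add_mset \<phi> \<Gamma>1) \<Delta>1 \<Longrightarrow> GT' (add_mset \<psi> \<Gamma>2) \<Delta>2
    \<Longrightarrow> GT' (add_mset (Disj \<phi> \<psi>) (\<Gamma>1 + \<Gamma>2)) (\<Delta>1 + \<Delta>2)"
| R_disj: "GT' \<Gamma> (add_mset \<phi> (add_mset \<psi> \<Delta>)) \<Longrightarrow> GT' \<Gamma> (add_mset (Disj \<phi> \<psi>) \<Delta>)"
| L_idisj: "GT' (add_mset (fill \<chi> \<phi>) \<Gamma>) \<Delta> \<Longrightarrow> GT' (add_mset (fill \<chi> \<psi>) \<Gamma>) \<Delta>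
    \<Longrightarrow> GT' (add_mset (fill \<chi> (IDisj \<phi> \<psi>)) \<Gamma>) \<Delta>"
| R_idisjL: "GT' \<Gamma> (add_mset (fill \<chi> \<phi>) \<Delta>) \<Longrightarrow> GT' \<Gamma> (add_mset (fill \<chi> (IDisj \<phi> \<psi>)) \<Delta>)"
| R_idisjR: "GT' \<Gamma> (add_mset (fill \<chi> \<psi>) \<Delta>) \<Longrightarrow> GT' \<Gamma> (add_mset (fill \<chi> (IDisj \<phi> \<psi>)) \<Delta>)"
| LC: "GT' (add_mset \<phi> (add_mset \<phi> \<Gamma>)) \<Delta> \<Longrightarrow> GT' (add_mset \<phi> \<Gamma>) \<Delta>"
| RC: "classical a \<Longrightarrow> GT' \<Gamma> (add_mset a (add_mset a \<Delta>)) \<Longrightarrow> GT' \<Gamma> (add_mset a \<Delta>)"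

end

theory Submission
  imports Defs
begin

text \<open>
  \<open>GT\<close> derivations embed into \<open>GT'\<close>: weakening and contraction are admissible
  in \<open>GT'\<close>, and together they turn the additive rules (R\<open>\<and>\<close>) and (L\<open>\<or>\<close>) into
  their multiplicative versions.

  For the converse, interpret a formula by its resolutions, the classical formulas
  obtained by choosing one disjunct of every inquisitive disjunction. Every rule of
  \<open>GT'\<close> preserves resolution validity: each resolution of the antecedent classically
  entails some resolution of the succedent. Conversely, a resolution-valid sequent of
  well-formed formulas is \<open>GT\<close>-derivable: its resolutions are classical, \<open>GT\<close> is
  complete for classical sequents, and the deep-inference rules for inquisitive
  disjunction lift derivations from resolutions to the formulas themselves (all
  resolutions on the left, one on the right).
\<close>

lemma GT'_weaken: "GT' \<Gamma> \<Delta> \<Longrightarrow> GT' (\<Gamma> + \<Gamma>') (\<Delta> + \<Delta>')"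
proof (induction arbitrary: \<Gamma>' \<Delta>' rule: GT'.induct)
  case (R_conj' \<Gamma>1 \<phi> \<Delta>1 \<Gamma>2 \<psi> \<Delta>2)
  have "GT' (\<Gamma>1 + \<Gamma>') (add_mset \<phi> (\<Delta>1 + \<Delta>'))" using R_conj'.IH(1) by simp
  from GT'.R_conj'[OF this R_conj'.hyps(2)] show ?case by (simp add: ac_simps)
next
  case (L_disj' \<phi> \<Gamma>1 \<Delta>1 \<psi> \<Gamma>2 \<Delta>2)
  have "GT' (add_mset \<phi> (\<Gamma>1 + \<Gamma>')) (\<Delta>1 + \<Delta>')" using L_disj'.IH(1) by simp
  from GT'.L_disj'[OF this L_disj'.hyps(2)] show ?case by (simp add: ac_simps)
qed (auto intro: GT'.intros)

lemma GT'_contract_ant: "GT' (\<Gamma> + \<Gamma> + \<Sigma>) \<Delta> \<Longrightarrow> GT' (\<Gamma> + \<Sigma>) \<Delta>"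
proof (induction \<Gamma> arbitrary: \<Sigma>)
  case (add \<phi> \<Gamma>)
  have "GT' (add_mset \<phi> (add_mset \<phi> (\<Gamma> + \<Gamma> + \<Sigma>))) \<Delta>" using add.prems by simp
  then have "GT' (add_mset \<phi> (\<Gamma> + \<Gamma> + \<Sigma>)) \<Delta>" by (rule GT'.LC)
  then have "GT' (\<Gamma> + \<Gamma> + add_mset \<phi> \<Sigma>) \<Delta>" by simp
  then have "GT' (\<Gamma> + add_mset \<phi> \<Sigma>) \<Delta>" by (rule add.IH)
  then show ?case by simp
qed simp

lemma GT'_contract_succ:
  "\<forall>\<phi>\<in>#\<Lambda>. classical \<phi> \<Longrightarrow> GT' \<Gamma> (\<Lambda> + \<Lambda> + \<Sigma>) \<Longrightarrow> GT' \<Gamma> (\<Lambda> + \<Sigma>)"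
proof (induction \<Lambda> arbitrary: \<Sigma>)
  case (add \<phi> \<Lambda>)
  have classical: "classical \<phi>" "\<forall>\<psi>\<in>#\<Lambda>. classical \<psi>" using add.prems(1) by simp_all
  have "GT' \<Gamma> (add_mset \<phi> (add_mset \<phi> (\<Lambda> + \<Lambda> + \<Sigma>)))" using add.prems(2) by simp
  then have "GT' \<Gamma> (add_mset \<phi> (\<Lambda> + \<Lambda> + \<Sigma>))" by (rule GT'.RC[OF classical(1)])
  then have "GT' \<Gamma> (\<Lambda> + \<Lambda> + add_mset \<phi> \<Sigma>)" by simp
  then have "GT' \<Gamma> (\<Lambda> + add_mset \<phi> \<Sigma>)" by (rule add.IH[OF classical(2)])
  then show ?case by simp
qed simp

lemma GT_imp_GT': "GT \<Gamma> \<Delta> \<Longrightarrow> GT' \<Gamma> \<Delta>"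
proof (induction rule: GT.induct)
  case (R_conj \<Lambda> \<Gamma> \<phi> \<psi> \<Delta>)
  from GT'.R_conj'[OF R_conj.IH]
  have "GT' (\<Gamma> + \<Gamma> + {#}) (\<Lambda> + \<Lambda> + {#Conj \<phi> \<psi>#})" by (simp add: ac_simps)
  then have "GT' \<Gamma> (\<Lambda> + \<Lambda> + {#Conj \<phi> \<psi>#})" using GT'_contract_ant[of \<Gamma> "{#}"] by simp
  then have "GT' \<Gamma> (\<Lambda> + {#Conj \<phi> \<psi>#})" by (rule GT'_contract_succ[OF R_conj.hyps(1)])
  then have "GT' (\<Gamma> + {#}) (\<Lambda> + {#Conj \<phi> \<psi>#} + \<Delta>)" by (rule GT'_weaken)
  then show ?case by (simp add: ac_simps)
next
  case (L_disj \<Lambda> \<phi> \<Gamma> \<psi> \<Delta>)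
  from GT'.L_disj'[OF L_disj.IH]
  have "GT' (\<Gamma> + \<Gamma> + {#Disj \<phi> \<psi>#}) (\<Lambda> + \<Lambda> + {#})" by (simp add: ac_simps)
  then have "GT' (\<Gamma> + {#Disj \<phi> \<psi>#}) (\<Lambda> + \<Lambda> + {#})" by (rule GT'_contract_ant)
  then have "GT' (add_mset (Disj \<phi> \<psi>) \<Gamma>) (\<Lambda> + \<Lambda> + {#})" by simp
  then have "GT' (add_mset (Disj \<phi> \<psi>) \<Gamma>) (\<Lambda> + {#})" by (rule GT'_contract_succ[OF L_disj.hyps(1)])
  then have "GT' (add_mset (Disj \<phi> \<psi>) \<Gamma> + {#}) (\<Lambda> + {#} + \<Delta>)" by (rule GT'_weaken)
  then show ?case by simp
qed (rule GT'.intros; assumption)+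

fun holds :: "(nat \<Rightarrow> bool) \<Rightarrow> fm \<Rightarrow> bool" where
  "holds v (Atom p) = v p"
| "holds v Bot = False"
| "holds v (Neg a) = (\<not> holds v a)"
| "holds v (Conj a b) = (holds v a \<and> holds v b)"
| "holds v (Disj a b) = (holds v a \<or> holds v b)"
| "holds v (IDisj a b) = (holds v a \<or> holds v b)"

definition classically_valid :: "fm multiset \<Rightarrow> fm multiset \<Rightarrow> bool" where
  "classically_valid X Y \<longleftrightarrow> (\<forall>v. (\<forall>x\<in>#X. holds v x) \<longrightarrow> (\<exists>y\<in>#Y. holds v y))"

fun resolutions :: "fm \<Rightarrow> fm set" where
  "resolutions (Atom p) = {Atom p}"
| "resolutions Bot = {Bot}"
| "resolutions (Neg a) = {Neg a}"
| "resolutions (Conj a b) = {Conj x y | x y. x \<in> resolutions a \<and> y \<in> resolutions b}"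
| "resolutions (Disj a b) = {Disj x y | x y. x \<in> resolutions a \<and> y \<in> resolutions b}"
| "resolutions (IDisj a b) = resolutions a \<union> resolutions b"

text \<open>Distinct occurrences of one formula in a multiset may be resolved differently.\<close>

definition is_resolution :: "fm multiset \<Rightarrow> fm multiset \<Rightarrow> bool" where
  "is_resolution \<Gamma> X \<longleftrightarrow> rel_mset (\<lambda>\<phi> r. r \<in> resolutions \<phi>) \<Gamma> X"

definition resolution_valid :: "fm multiset \<Rightarrow> fm multiset \<Rightarrow> bool" where
  "resolution_valid \<Gamma> \<Delta> \<longleftrightarrow>
     (\<forall>X. is_resolution \<Gamma> X \<longrightarrow> (\<exists>Y. is_resolution \<Delta> Y \<and> classically_valid X Y))"

lemma resolutions_classical: "classical a \<Longrightarrow> resolutions a = {a}"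
  by (induction a) auto

lemma resolutions_nonempty: "resolutions \<phi> \<noteq> {}"
  by (induction \<phi>) auto

lemma classical_if_resolution: "wf_fm \<phi> \<Longrightarrow> r \<in> resolutions \<phi> \<Longrightarrow> classical r"
  by (induction \<phi> arbitrary: r) auto

lemma resolutions_fill_IDisj:
  "resolutions (fill \<chi> (IDisj \<phi> \<psi>)) = resolutions (fill \<chi> \<phi>) \<union> resolutions (fill \<chi> \<psi>)"
  by (induction \<chi>) (simp_all, blast+)

lemma is_resolution_empty [simp]: "is_resolution {#} X \<longleftrightarrow> X = {#}"
  by (simp add: is_resolution_def)

lemma is_resolution_add_mset:
  "is_resolution (add_mset \<phi> \<Gamma>) X \<longleftrightarrow>
     (\<exists>r X'. X = add_mset r X' \<and> r \<in> resolutions \<phi> \<and> is_resolution \<Gamma> X')"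
  unfolding is_resolution_def by (blast dest: msed_rel_invL intro: rel_mset_Plus)

lemma is_resolution_union:
  "is_resolution (\<Gamma>1 + \<Gamma>2) X \<longleftrightarrow>
     (\<exists>X1 X2. X = X1 + X2 \<and> is_resolution \<Gamma>1 X1 \<and> is_resolution \<Gamma>2 X2)"
proof (induction \<Gamma>1 arbitrary: X)
  case (add \<phi> \<Gamma>1)
  show ?case
    by (simp add: is_resolution_add_mset add.IH) (metis union_mset_add_mset_left)
qed simp

lemma is_resolution_exists: "\<exists>X. is_resolution \<Gamma> X"
  by (induction \<Gamma>) (auto simp: is_resolution_add_mset ex_in_conv resolutions_nonempty)

lemma resolution_validI:
  "(\<And>X. is_resolution \<Gamma> X \<Longrightarrow> \<exists>Y. is_resolution \<Delta> Y \<and> classically_valid X Y) \<Longrightarrow> resolution_valid \<Gamma> \<Delta>"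
  unfolding resolution_valid_def by blast

lemma resolution_validD:
  "resolution_valid \<Gamma> \<Delta> \<Longrightarrow> is_resolution \<Gamma> X \<Longrightarrow> \<exists>Y. is_resolution \<Delta> Y \<and> classically_valid X Y"
  unfolding resolution_valid_def by blast

lemma resolution_valid_ax_atom: "resolution_valid (add_mset (Atom p) \<Gamma>) (add_mset (Atom p) \<Delta>)"
  using is_resolution_exists[of \<Delta>]
  by (force simp: resolution_valid_def is_resolution_add_mset classically_valid_def)

lemma resolution_valid_ax_bot: "resolution_valid (add_mset Bot \<Gamma>) \<Delta>"
  using is_resolution_exists[of \<Delta>]
  by (force simp: resolution_valid_def is_resolution_add_mset classically_valid_def)

lemma resolution_valid_L_conj:
  "resolution_valid (add_mset \<phi> (add_mset \<psi> \<Gamma>)) \<Delta> \<Longrightarrow> resolution_valid (add_mset (Conj \<phi> \<psi>) \<Gamma>) \<Delta>"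
  by (fastforce simp: resolution_valid_def is_resolution_add_mset classically_valid_def)

lemma resolution_valid_L_neg:
  assumes "classical a" and "resolution_valid \<Gamma> (add_mset a \<Delta>)"
  shows "resolution_valid (add_mset (Neg a) \<Gamma>) \<Delta>"
proof (rule resolution_validI)
  fix X assume "is_resolution (add_mset (Neg a) \<Gamma>) X"
  then obtain X' where X: "X = add_mset (Neg a) X'" "is_resolution \<Gamma> X'"
    by (auto simp: is_resolution_add_mset)
  then obtain Y where "is_resolution (add_mset a \<Delta>) Y" "classically_valid X' Y"
    using assms(2) by (blast dest: resolution_validD)
  then obtain Y' where "is_resolution \<Delta> Y'" "classically_valid X' (add_mset a Y')"
    using resolutions_classical[OF assms(1)] by (auto simp: is_resolution_add_mset)
  then show "\<exists>Y. is_resolution \<Delta> Y \<and> classically_valid X Y"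
    unfolding X classically_valid_def by auto
qed

lemma resolution_valid_R_neg:
  assumes "classical a" and "resolution_valid (add_mset a \<Gamma>) \<Delta>"
  shows "resolution_valid \<Gamma> (add_mset (Neg a) \<Delta>)"
proof (rule resolution_validI)
  fix X assume "is_resolution \<Gamma> X"
  then have "is_resolution (add_mset a \<Gamma>) (add_mset a X)"
    using resolutions_classical[OF assms(1)] by (auto simp: is_resolution_add_mset)
  then obtain Y where "is_resolution \<Delta> Y" "classically_valid (add_mset a X) Y"
    using assms(2) by (blast dest: resolution_validD)
  then have "is_resolution (add_mset (Neg a) \<Delta>) (add_mset (Neg a) Y)"
    and "classically_valid X (add_mset (Neg a) Y)"
    by (auto simp: is_resolution_add_mset classically_valid_def)
  then show "\<exists>Y. is_resolution (add_mset (Neg a) \<Delta>) Y \<and> classically_valid X Y" by blast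
qed

lemma resolution_valid_R_conj':
  assumes "resolution_valid \<Gamma>1 (add_mset \<phi> \<Delta>1)" and "resolution_valid \<Gamma>2 (add_mset \<psi> \<Delta>2)"
  shows "resolution_valid (\<Gamma>1 + \<Gamma>2) (add_mset (Conj \<phi> \<psi>) (\<Delta>1 + \<Delta>2))"
proof (rule resolution_validI)
  fix X assume "is_resolution (\<Gamma>1 + \<Gamma>2) X"
  then obtain X1 X2 where X: "X = X1 + X2" "is_resolution \<Gamma>1 X1" "is_resolution \<Gamma>2 X2"
    by (auto simp: is_resolution_union)
  obtain r1 Y1 where "r1 \<in> resolutions \<phi>" "is_resolution \<Delta>1 Y1"
    "classically_valid X1 (add_mset r1 Y1)"
    using resolution_validD[OF assms(1) X(2)] by (auto simp: is_resolution_add_mset)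
  moreover obtain r2 Y2 where "r2 \<in> resolutions \<psi>" "is_resolution \<Delta>2 Y2"
    "classically_valid X2 (add_mset r2 Y2)"
    using resolution_validD[OF assms(2) X(3)] by (auto simp: is_resolution_add_mset)
  ultimately have "is_resolution (add_mset (Conj \<phi> \<psi>) (\<Delta>1 + \<Delta>2)) (add_mset (Conj r1 r2) (Y1 + Y2))"
    and "classically_valid X (add_mset (Conj r1 r2) (Y1 + Y2))"
    unfolding X by (auto simp: is_resolution_add_mset is_resolution_union classically_valid_def)
  then show "\<exists>Y. is_resolution (add_mset (Conj \<phi> \<psi>) (\<Delta>1 + \<Delta>2)) Y \<and> classically_valid X Y" by blast
qed

lemma resolution_valid_L_disj':
  assumes "resolution_valid (add_mset \<phi> \<Gamma>1) \<Delta>1" and "resolution_valid (add_mset \<psi> \<Gamma>2) \<Delta>2"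
  shows "resolution_valid (add_mset (Disj \<phi> \<psi>) (\<Gamma>1 + \<Gamma>2)) (\<Delta>1 + \<Delta>2)"
proof (rule resolution_validI)
  fix X assume "is_resolution (add_mset (Disj \<phi> \<psi>) (\<Gamma>1 + \<Gamma>2)) X"
  then obtain r1 r2 X1 X2 where X: "X = add_mset (Disj r1 r2) (X1 + X2)"
    and "r1 \<in> resolutions \<phi>" "is_resolution \<Gamma>1 X1" "r2 \<in> resolutions \<psi>" "is_resolution \<Gamma>2 X2"
    by (auto simp: is_resolution_add_mset is_resolution_union)
  then have "is_resolution (add_mset \<phi> \<Gamma>1) (add_mset r1 X1)"
    and "is_resolution (add_mset \<psi> \<Gamma>2) (add_mset r2 X2)"
    by (auto simp: is_resolution_add_mset)
  then obtain Y1 Y2 where "is_resolution \<Delta>1 Y1" "classically_valid (add_mset r1 X1) Y1"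
    and "is_resolution \<Delta>2 Y2" "classically_valid (add_mset r2 X2) Y2"
    using assms by (blast dest: resolution_validD)
  then have "is_resolution (\<Delta>1 + \<Delta>2) (Y1 + Y2)" and "classically_valid X (Y1 + Y2)"
    unfolding X by (auto simp: is_resolution_union classically_valid_def)
  then show "\<exists>Y. is_resolution (\<Delta>1 + \<Delta>2) Y \<and> classically_valid X Y" by blast
qed

lemma resolution_valid_R_disj:
  assumes "resolution_valid \<Gamma> (add_mset \<phi> (add_mset \<psi> \<Delta>))"
  shows "resolution_valid \<Gamma> (add_mset (Disj \<phi> \<psi>) \<Delta>)"
proof (rule resolution_validI)
  fix X assume "is_resolution \<Gamma> X"
  then obtain Y where "is_resolution (add_mset \<phi> (add_mset \<psi> \<Delta>)) Y" "classically_valid X Y"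
    using assms by (blast dest: resolution_validD)
  then obtain r1 r2 Y' where "r1 \<in> resolutions \<phi>" "r2 \<in> resolutions \<psi>" "is_resolution \<Delta> Y'"
    "classically_valid X (add_mset r1 (add_mset r2 Y'))"
    by (auto simp: is_resolution_add_mset)
  then have "is_resolution (add_mset (Disj \<phi> \<psi>) \<Delta>) (add_mset (Disj r1 r2) Y')"
    and "classically_valid X (add_mset (Disj r1 r2) Y')"
    by (auto simp: is_resolution_add_mset classically_valid_def)
  then show "\<exists>Y. is_resolution (add_mset (Disj \<phi> \<psi>) \<Delta>) Y \<and> classically_valid X Y" by blast
qed

lemma resolution_valid_L_idisj:
  assumes "resolution_valid (add_mset (fill \<chi> \<phi>) \<Gamma>) \<Delta>"
    and "resolution_valid (add_mset (fill \<chi> \<psi>) \<Gamma>) \<Delta>"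
  shows "resolution_valid (add_mset (fill \<chi> (IDisj \<phi> \<psi>)) \<Gamma>) \<Delta>"
proof (rule resolution_validI)
  fix X assume "is_resolution (add_mset (fill \<chi> (IDisj \<phi> \<psi>)) \<Gamma>) X"
  then have "is_resolution (add_mset (fill \<chi> \<phi>) \<Gamma>) X \<or>
      is_resolution (add_mset (fill \<chi> \<psi>) \<Gamma>) X"
    by (auto simp: is_resolution_add_mset resolutions_fill_IDisj)
  then show "\<exists>Y. is_resolution \<Delta> Y \<and> classically_valid X Y"
    using assms by (blast dest: resolution_validD)
qed

lemma resolution_valid_R_idisj:
  assumes "resolution_valid \<Gamma> (add_mset \<phi>' \<Delta>)" and "resolutions \<phi>' \<subseteq> resolutions \<phi>"
  shows "resolution_valid \<Gamma> (add_mset \<phi> \<Delta>)"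
  using assms by (fastforce simp: resolution_valid_def is_resolution_add_mset)

lemma resolution_valid_LC:
  assumes "resolution_valid (add_mset \<phi> (add_mset \<phi> \<Gamma>)) \<Delta>"
  shows "resolution_valid (add_mset \<phi> \<Gamma>) \<Delta>"
proof (rule resolution_validI)
  fix X assume "is_resolution (add_mset \<phi> \<Gamma>) X"
  then obtain r X' where X: "X = add_mset r X'" "r \<in> resolutions \<phi>" "is_resolution \<Gamma> X'"
    by (auto simp: is_resolution_add_mset)
  then have "is_resolution (add_mset \<phi> (add_mset \<phi> \<Gamma>)) (add_mset r X)"
    by (auto simp: is_resolution_add_mset)
  then obtain Y where "is_resolution \<Delta> Y" "classically_valid (add_mset r X) Y"
    using assms by (blast dest: resolution_validD)
  then show "\<exists>Y. is_resolution \<Delta> Y \<and> classically_valid X Y"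
    unfolding X classically_valid_def by auto
qed

text \<open>For a non-classical formula right contraction would be unsound: the two copies could
  need different resolutions.\<close>

lemma resolution_valid_RC:
  assumes "classical a" and "resolution_valid \<Gamma> (add_mset a (add_mset a \<Delta>))"
  shows "resolution_valid \<Gamma> (add_mset a \<Delta>)"
proof (rule resolution_validI)
  fix X assume "is_resolution \<Gamma> X"
  then obtain Y0 where "is_resolution (add_mset a (add_mset a \<Delta>)) Y0" "classically_valid X Y0"
    using assms(2) by (blast dest: resolution_validD)
  then obtain Y where "is_resolution \<Delta> Y" "classically_valid X (add_mset a (add_mset a Y))"
    using resolutions_classical[OF assms(1)] by (auto simp: is_resolution_add_mset)
  then have "is_resolution (add_mset a \<Delta>) (add_mset a Y)"
    and "classically_valid X (add_mset a Y)"
    using resolutions_classical[OF assms(1)]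
    by (auto simp: is_resolution_add_mset classically_valid_def)
  then show "\<exists>Y. is_resolution (add_mset a \<Delta>) Y \<and> classically_valid X Y" by blast
qed

lemma GT'_resolution_valid: "GT' \<Gamma> \<Delta> \<Longrightarrow> resolution_valid \<Gamma> \<Delta>"
proof (induction rule: GT'.induct)
  case (R_idisjL \<Gamma> \<chi> \<phi> \<Delta> \<psi>)
  show ?case by (rule resolution_valid_R_idisj[OF R_idisjL.IH]) (simp add: resolutions_fill_IDisj)
next
  case (R_idisjR \<Gamma> \<chi> \<psi> \<Delta> \<phi>)
  show ?case by (rule resolution_valid_R_idisj[OF R_idisjR.IH]) (simp add: resolutions_fill_IDisj)
qed (auto intro: resolution_valid_ax_atom resolution_valid_ax_bot resolution_valid_L_neg
  resolution_valid_R_neg resolution_valid_L_conj resolution_valid_R_conj' resolution_valid_L_disj'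
  resolution_valid_R_disj resolution_valid_L_idisj resolution_valid_LC resolution_valid_RC)

definition atomic :: "fm \<Rightarrow> bool" where
  "atomic x \<longleftrightarrow> x = Bot \<or> (\<exists>p. x = Atom p)"

lemma classically_valid_ant_simps:
  "classically_valid (add_mset (Neg a) \<Gamma>) \<Delta> \<longleftrightarrow> classically_valid \<Gamma> (add_mset a \<Delta>)"
  "classically_valid (add_mset (Conj a b) \<Gamma>) \<Delta> \<longleftrightarrow> classically_valid (add_mset a (add_mset b \<Gamma>)) \<Delta>"
  "classically_valid (add_mset (Disj a b) \<Gamma>) \<Delta> \<longleftrightarrow>
     classically_valid (add_mset a \<Gamma>) \<Delta> \<and> classically_valid (add_mset b \<Gamma>) \<Delta>"
  unfolding classically_valid_def by auto

lemma classically_valid_succ_simps: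
  "classically_valid \<Gamma> (add_mset (Neg a) \<Delta>) \<longleftrightarrow> classically_valid (add_mset a \<Gamma>) \<Delta>"
  "classically_valid \<Gamma> (add_mset (Conj a b) \<Delta>) \<longleftrightarrow>
     classically_valid \<Gamma> (add_mset a \<Delta>) \<and> classically_valid \<Gamma> (add_mset b \<Delta>)"
  "classically_valid \<Gamma> (add_mset (Disj a b) \<Delta>) \<longleftrightarrow>
     classically_valid \<Gamma> (add_mset a (add_mset b \<Delta>))"
  unfolding classically_valid_def by auto

lemma GT_atomic_complete:
  assumes "\<forall>x\<in>#\<Gamma>. atomic x" and "\<forall>x\<in>#\<Delta>. atomic x" and "classically_valid \<Gamma> \<Delta>"
  shows "GT \<Gamma> \<Delta>"
proof (cases "Bot \<in># \<Gamma>")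
  case True
  then show ?thesis by (metis GT.ax_bot multi_member_split)
next
  case False
  define v where "v p \<longleftrightarrow> Atom p \<in># \<Gamma>" for p
  have "\<forall>x\<in>#\<Gamma>. holds v x" using assms(1) False by (auto simp: atomic_def v_def)
  then obtain y where "y \<in># \<Delta>" "holds v y" using assms(3) unfolding classically_valid_def by blast
  then obtain p where "Atom p \<in># \<Gamma>" "Atom p \<in># \<Delta>" using assms(2) by (auto simp: atomic_def v_def)
  then show ?thesis by (metis GT.ax_atom multi_member_split)
qed

lemma GT_R_conj_classical:
  "\<forall>x\<in>#\<Lambda>. classical x \<Longrightarrow> GT \<Gamma> (add_mset \<phi> \<Lambda>) \<Longrightarrow> GT \<Gamma> (add_mset \<psi> \<Lambda>) \<Longrightarrow>
    GT \<Gamma> (add_mset (Conj \<phi> \<psi>) \<Lambda>)"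
  using GT.R_conj[where \<Delta> = "{#}"] by simp

lemma GT_L_disj_classical:
  "\<forall>x\<in>#\<Lambda>. classical x \<Longrightarrow> GT (add_mset \<phi> \<Gamma>) \<Lambda> \<Longrightarrow> GT (add_mset \<psi> \<Gamma>) \<Lambda> \<Longrightarrow>
    GT (add_mset (Disj \<phi> \<psi>) \<Gamma>) \<Lambda>"
  using GT.L_disj[where \<Delta> = "{#}"] by simp

lemma GT_classical_complete:
  "\<forall>x\<in>#\<Gamma>. classical x \<Longrightarrow> \<forall>x\<in>#\<Delta>. classical x \<Longrightarrow> classically_valid \<Gamma> \<Delta> \<Longrightarrow>
    GT \<Gamma> \<Delta>"
proof (induction "\<Sum>x\<in>#\<Gamma> + \<Delta>. size x" arbitrary: \<Gamma> \<Delta> rule: less_induct)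
  case less
  consider (ant) x \<Gamma>' where "\<Gamma> = add_mset x \<Gamma>'" "\<not> atomic x"
    | (succ) x \<Delta>' where "\<Delta> = add_mset x \<Delta>'" "\<not> atomic x"
    | (atomic) "\<forall>x\<in>#\<Gamma>. atomic x" "\<forall>x\<in>#\<Delta>. atomic x"
    by (metis multi_member_split)
  then show ?case
  proof cases
    case ant
    with less.prems show ?thesis
      by (cases x) (auto simp: atomic_def classically_valid_ant_simps
          intro!: GT.L_neg GT.L_conj GT_L_disj_classical less.hyps)
  next
    case succ
    with less.prems show ?thesis
      by (cases x) (auto simp: atomic_def classically_valid_succ_simps
          intro!: GT.R_neg GT.R_disj GT_R_conj_classical less.hyps)
  next
    case atomic
    with less.prems(3) show ?thesis by (intro GT_atomic_complete)
  qed
qed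

fun ctx_comp :: "ctx \<Rightarrow> ctx \<Rightarrow> ctx" where
  "ctx_comp Hole d = d"
| "ctx_comp (CConjL c b) d = CConjL (ctx_comp c d) b"
| "ctx_comp (CConjR a c) d = CConjR a (ctx_comp c d)"
| "ctx_comp (CDisjL c b) d = CDisjL (ctx_comp c d) b"
| "ctx_comp (CDisjR a c) d = CDisjR a (ctx_comp c d)"
| "ctx_comp (CIDisjL c b) d = CIDisjL (ctx_comp c d) b"
| "ctx_comp (CIDisjR a c) d = CIDisjR a (ctx_comp c d)"

lemma fill_ctx_comp [simp]: "fill (ctx_comp c d) e = fill c (fill d e)"
  by (induction c) auto

lemma GT_succ_of_resolution:
  "r \<in> resolutions \<phi> \<Longrightarrow> GT \<Gamma> (add_mset (fill \<chi> r) \<Delta>) \<Longrightarrow> GT \<Gamma> (add_mset (fill \<chi> \<phi>) \<Delta>)"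
proof (induction \<phi> arbitrary: \<chi> r)
  case (Conj a b)
  then obtain r1 r2 where r: "r = Conj r1 r2" "r1 \<in> resolutions a" "r2 \<in> resolutions b" by auto
  have "GT \<Gamma> (add_mset (fill (ctx_comp \<chi> (CConjL Hole r2)) a) \<Delta>)"
    by (rule Conj.IH(1)[OF r(2)]) (use Conj.prems(2) r in simp)
  then have "GT \<Gamma> (add_mset (fill (ctx_comp \<chi> (CConjR a Hole)) b) \<Delta>)"
    by (intro Conj.IH(2)[OF r(3)]) simp
  then show ?case by simp
next
  case (Disj a b)
  then obtain r1 r2 where r: "r = Disj r1 r2" "r1 \<in> resolutions a" "r2 \<in> resolutions b" by auto
  have "GT \<Gamma> (add_mset (fill (ctx_comp \<chi> (CDisjL Hole r2)) a) \<Delta>)"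
    by (rule Disj.IH(1)[OF r(2)]) (use Disj.prems(2) r in simp)
  then have "GT \<Gamma> (add_mset (fill (ctx_comp \<chi> (CDisjR a Hole)) b) \<Delta>)"
    by (intro Disj.IH(2)[OF r(3)]) simp
  then show ?case by simp
next
  case (IDisj a b)
  then consider "r \<in> resolutions a" | "r \<in> resolutions b" by auto
  then show ?case
  proof cases
    case 1
    from IDisj.IH(1)[OF 1 IDisj.prems(2)] show ?thesis by (rule GT.R_idisjL)
  next
    case 2
    from IDisj.IH(2)[OF 2 IDisj.prems(2)] show ?thesis by (rule GT.R_idisjR)
  qed
qed auto

lemma GT_ant_of_resolutions:
  "(\<And>r. r \<in> resolutions \<phi> \<Longrightarrow> GT (add_mset (fill \<chi> r) \<Gamma>) \<Delta>) \<Longrightarrow> GT (add_mset (fill \<chi> \<phi>) \<Gamma>) \<Delta>"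
proof (induction \<phi> arbitrary: \<chi>)
  case (Conj a b)
  have "GT (add_mset (fill (ctx_comp \<chi> (CConjL Hole r2)) a) \<Gamma>) \<Delta>" if "r2 \<in> resolutions b" for r2
    by (rule Conj.IH(1)) (use Conj.prems that in simp)
  then show ?case using Conj.IH(2)[of "ctx_comp \<chi> (CConjR a Hole)"] by simp
next
  case (Disj a b)
  have "GT (add_mset (fill (ctx_comp \<chi> (CDisjL Hole r2)) a) \<Gamma>) \<Delta>" if "r2 \<in> resolutions b" for r2
    by (rule Disj.IH(1)) (use Disj.prems that in simp)
  then show ?case using Disj.IH(2)[of "ctx_comp \<chi> (CDisjR a Hole)"] by simp
next
  case (IDisj a b)
  then show ?case by (intro GT.L_idisj) auto
qed auto

lemma GT_succ_of_is_resolution: "is_resolution \<Delta> Y \<Longrightarrow> GT \<Gamma> (Y + \<Sigma>) \<Longrightarrow> GT \<Gamma> (\<Delta> + \<Sigma>)"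
proof (induction \<Delta> arbitrary: Y \<Sigma>)
  case (add \<phi> \<Delta>)
  then obtain r Y' where Y: "Y = add_mset r Y'" "r \<in> resolutions \<phi>" "is_resolution \<Delta> Y'"
    by (auto simp: is_resolution_add_mset)
  then have "GT \<Gamma> (\<Delta> + add_mset r \<Sigma>)" using add.prems(2) by (intro add.IH[OF Y(3)]) simp
  then have "GT \<Gamma> (add_mset (fill Hole \<phi>) (\<Delta> + \<Sigma>))"
    by (intro GT_succ_of_resolution[OF Y(2)]) simp
  then show ?case by simp
qed simp

lemma GT_ant_of_is_resolutions: "(\<And>X. is_resolution \<Gamma> X \<Longrightarrow> GT (X + \<Sigma>) \<Delta>) \<Longrightarrow> GT (\<Gamma> + \<Sigma>) \<Delta>"
proof (induction \<Gamma> arbitrary: \<Sigma>)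
  case (add \<phi> \<Gamma>)
  have resolved: "GT (\<Gamma> + add_mset r \<Sigma>) \<Delta>" if "r \<in> resolutions \<phi>" for r
  proof (rule add.IH)
    fix X assume "is_resolution \<Gamma> X"
    with that have "is_resolution (add_mset \<phi> \<Gamma>) (add_mset r X)"
      by (auto simp: is_resolution_add_mset)
    then have "GT (add_mset r X + \<Sigma>) \<Delta>" by (rule add.prems)
    then show "GT (X + add_mset r \<Sigma>) \<Delta>" by simp
  qed
  have "GT (add_mset (fill Hole \<phi>) (\<Gamma> + \<Sigma>)) \<Delta>"
    by (rule GT_ant_of_resolutions) (use resolved in simp)
  then show ?case by simp
qed simp

lemma is_resolution_classical: "is_resolution \<Gamma> X \<Longrightarrow> \<forall>\<phi>\<in>#\<Gamma>. wf_fm \<phi> \<Longrightarrow> \<forall>r\<in>#X. classical r"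
  by (induction \<Gamma> arbitrary: X) (auto simp: is_resolution_add_mset classical_if_resolution)

lemma GT_complete:
  assumes "\<forall>\<phi>\<in>#\<Gamma>. wf_fm \<phi>" and "\<forall>\<phi>\<in>#\<Delta>. wf_fm \<phi>" and "resolution_valid \<Gamma> \<Delta>"
  shows "GT \<Gamma> \<Delta>"
proof -
  have "GT X \<Delta>" if X: "is_resolution \<Gamma> X" for X
  proof -
    obtain Y where Y: "is_resolution \<Delta> Y" "classically_valid X Y"
      using resolution_validD[OF assms(3) X] by blast
    have "GT X Y"
      using is_resolution_classical[OF X assms(1)] is_resolution_classical[OF Y(1) assms(2)] Y(2)
      by (rule GT_classical_complete)
    then show "GT X \<Delta>" using GT_succ_of_is_resolution[OF Y(1), of X "{#}"] by simp
  qed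
  then show ?thesis using GT_ant_of_is_resolutions[of \<Gamma> "{#}" \<Delta>] by simp
qed

theorem proposition9p2:
  fixes \<Gamma> \<Delta> :: "fm multiset"
  assumes "\<forall>x\<in>#\<Gamma>. wf_fm x" and "\<forall>x\<in>#\<Delta>. wf_fm x"
  shows "GT \<Gamma> \<Delta> \<longleftrightarrow> GT' \<Gamma> \<Delta>"
proof
  assume "GT \<Gamma> \<Delta>"
  then show "GT' \<Gamma> \<Delta>" by (rule GT_imp_GT')
next
  assume "GT' \<Gamma> \<Delta>"
  then have "resolution_valid \<Gamma> \<Delta>" by (rule GT'_resolution_valid)
  with assms show "GT \<Gamma> \<Delta>" by (rule GT_complete)
qed

end
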